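(* Let $0<\eta<1$, $M>1$ and $0<\delta<0.01$. For every $g\in H$, $\Delta\in X$ and $t>0$, $$\int_{-1}^{1}\widehat{\alpha}_{\eta,M}(a_tu_rg;\Delta)^{1+\delta}\,dr\le 80\delta^{-1}e^{\delta t}\widehat{\alpha}_{\eta,M}(g;\Delta)^{1+\delta}+80\delta^{-1}\alpha(g\Delta)^{0.9}+\tfrac12 e^{6t}.$$
   Context: $\|\cdot\|$ is the supremum norm on $\mathbb{R}^3$. $Q_0(v)=v_2^2-2v_1v_3$, $G=\mathrm{SL}_3(\mathbb{R})$, $H=\{g\in G:Q_0(gv)=Q_0(v)\ \forall v\}$, $X$ the space of unimodular lattices in $\mathbb{R}^3$; $g^*=(g^T)^{-1}$, $\Delta^*$ the dual lattice. $a_t=\mathrm{diag}(e^t,1,e^{-t})$, $u_r=\begin{pmatrix}1&r&r^2/2\\0&1&r\\0&0&1\end{pmatrix}$. $\alpha(\Delta)=\sup\{\|v\|^{-1}:v\in(\Delta\cup\Delta^* )\setminus\{0\}\}$. $\mathcal{H}_{\eta,M}=\{v:|Q_0(v)|<\eta\|v\|^{-50M}\}$. $\widehat{\alpha}_{1,\eta,M}(g;\Delta)=\sup\{\|gv\|^{-1}:v\in\Delta\setminus(\mathcal{H}_{\eta,M}\cup\{0\})\}$, $\widehat{\alpha}_{2,\eta,M}(g;\Delta)=\widehat{\alpha}_{1,\eta,M}(g^*;\Delta^* )$, $\widehat{\alpha}_{\eta,M}=\max(\widehat{\alpha}_{1,\eta,M},\widehat{\alpha}_{2,\eta,M})$.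 *)

theory Defs
  imports "HOL-Analysis.Analysis"
begin

type_synonym vec3 = "real^3"
type_synonym mat3 = "real^3^3"

text \<open>Indices of the type 3 are written 1, 2, 3 (where 3 = 0 in the numeral type).\<close>

definition Q0 :: "vec3 \<Rightarrow> real" where
  "Q0 v = (v$2)^2 - 2 * (v$1) * (v$3)"

definition SL3 :: "mat3 set" where
  "SL3 = {g. det g = 1}"

definition Hgrp :: "mat3 set" where
  "Hgrp = {g \<in> SL3. \<forall>v. Q0 (g *v v) = Q0 v}"

definition dualmat :: "mat3 \<Rightarrow> mat3" where
  "dualmat g = matrix_inv (transpose g)"

definition int_vecs :: "vec3 set" where
  "int_vecs = {v. \<forall>i. v$i \<in> \<int>}"

definition unimod_lattice :: "vec3 set \<Rightarrow> bool" where
  "unimod_lattice L \<longleftrightarrow> (\<exists>A\<in>SL3. L = (\<lambda>z. A *v z) ` int_vecs)"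

definition dual_lattice :: "vec3 set \<Rightarrow> vec3 set" where
  "dual_lattice L = {w. \<forall>v\<in>L. w \<bullet> v \<in> \<int>}"

definition act :: "mat3 \<Rightarrow> vec3 set \<Rightarrow> vec3 set" where
  "act g L = (\<lambda>v. g *v v) ` L"

definition a_mat :: "real \<Rightarrow> mat3" where
  "a_mat t = (\<chi> i j. if i = j then (if i = 1 then exp t else if i = 2 then 1 else exp (- t)) else 0)"

definition u_mat :: "real \<Rightarrow> mat3" where
  "u_mat r = (\<chi> i j. if i = j then 1
                      else if i = 1 \<and> j = 2 then r
                      else if i = 1 \<and> j = 3 then r^2 / 2
                      else if i = 2 \<and> j = 3 then r
                      else 0)"

definition alpha :: "vec3 set \<Rightarrow> real" where
  "alpha L = Sup {1 / infnorm v | v. v \<in> (L \<union> dual_lattice L) - {0}}"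

definition Hset :: "real \<Rightarrow> real \<Rightarrow> vec3 set" where
  "Hset \<eta> M = {v. \<bar>Q0 v\<bar> < \<eta> * infnorm v powr (- 50 * M)}"

definition alpha_hat1 :: "real \<Rightarrow> real \<Rightarrow> mat3 \<Rightarrow> vec3 set \<Rightarrow> real" where
  "alpha_hat1 \<eta> M g L = Sup {1 / infnorm (g *v v) | v. v \<in> L - (Hset \<eta> M \<union> {0})}"

definition alpha_hat2 :: "real \<Rightarrow> real \<Rightarrow> mat3 \<Rightarrow> vec3 set \<Rightarrow> real" where
  "alpha_hat2 \<eta> M g L = alpha_hat1 \<eta> M (dualmat g) (dual_lattice L)"

definition alpha_hat :: "real \<Rightarrow> real \<Rightarrow> mat3 \<Rightarrow> vec3 set \<Rightarrow> real" where
  "alpha_hat \<eta> M g L = max (alpha_hat1 \<eta> M g L) (alpha_hat2 \<eta> M g L)"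

end

theory Submission
  imports Defs
begin

text \<open>
  Write \<Lambda> = g\<Delta> and B = alpha \<Lambda>. The vectors x of \<Lambda> with 2 B |x|^2 < 1 lie on one line:
  the cross product of two of them lies in the dual lattice and has norm below 1/B, so it
  vanishes; the same holds for the dual lattice. For a vector v of \<Delta> outside Hset, either
  g v is short, hence a multiple of a fixed vector u and contracted by a_t u_r exactly like u,
  or 1/|g v| <= min (alpha_hat g) (sqrt (2 B)), and a_t u_r shrinks g v by a factor of at most
  3 e^t. The contragredient of a_t u_r is conjugate to a_t u_r by a signed antidiagonal
  permutation, so dual vectors are treated in the same way. Hence alpha_hat (a_t u_r g) is at
  most the maximum of alpha_hat g * |u|/|a_t u_r u| for two fixed vectors u and the exceptional
  term 3 e^t min (alpha_hat g) (sqrt (2 B)). For a single u the ratio |u|/|a_t u_r u| is at most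
  a multiple of 1/(|r - r0| + e^-t), whose (1+\<delta>)-th power has integral O(e^(\<delta> t)/\<delta>) over
  [-1, 1]. The exceptional term is absorbed by elementary estimates, separately for t <= 4 and
  t >= 4.
\<close>

section \<open>Inverse and contragredient matrices\<close>

lemma infnorm_vec3: "infnorm (x::vec3) = max \<bar>x$1\<bar> (max \<bar>x$2\<bar> \<bar>x$3\<bar>)"
proof -
  have "{\<bar>x$i\<bar> |i. i \<in> (UNIV::3 set)} = {\<bar>x$1\<bar>, \<bar>x$2\<bar>, \<bar>x$3\<bar>}"
    unfolding UNIV_3 by auto
  then show ?thesis unfolding infnorm_cart by (simp add: cSup_insert sup_max)
qed

lemma infnorm_matrix_vector_le:
  fixes P :: mat3
  assumes "\<And>i. (\<Sum>j\<in>UNIV. \<bar>P$i$j\<bar>) \<le> C"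
  shows "infnorm (P *v v) \<le> C * infnorm v"
proof -
  have "\<bar>(P *v v)$i\<bar> \<le> C * infnorm v" for i
  proof -
    have "\<bar>(P *v v)$i\<bar> \<le> (\<Sum>j\<in>UNIV. \<bar>P$i$j\<bar> * infnorm v)"
      unfolding matrix_vector_mult_def
      by (auto intro!: order_trans[OF sum_abs] sum_mono mult_left_mono
               simp: abs_mult component_le_infnorm_cart)
    also have "\<dots> \<le> C * infnorm v"
      using assms[of i] by (simp add: sum_distrib_right[symmetric] mult_right_mono infnorm_pos_le)
    finally show ?thesis .
  qed
  then show ?thesis unfolding infnorm_vec3 by simp
qed

lemma
  fixes N :: "real^'n^'n"
  assumes "det N \<noteq> 0"
  shows matrix_inv_right: "N ** matrix_inv N = mat 1"
    and matrix_inv_left: "matrix_inv N ** N = mat 1"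
proof -
  have "\<exists>N'. N ** N' = mat 1 \<and> N' ** N = mat 1"
    using assms by (simp add: invertible_det_nz[symmetric] invertible_def)
  then have "N ** matrix_inv N = mat 1 \<and> matrix_inv N ** N = mat 1"
    unfolding matrix_inv_def by (rule someI_ex)
  then show "N ** matrix_inv N = mat 1" "matrix_inv N ** N = mat 1" by auto
qed

lemma matrix_vector_mult_eq_0_iff:
  fixes N :: "real^'n^'n"
  assumes "det N \<noteq> 0"
  shows "N *v x = 0 \<longleftrightarrow> x = 0"
  by (metis assms matrix_inv_left matrix_vector_mul_assoc matrix_vector_mul_lid
        matrix_vector_mult_0_right)

lemma matrix_inv_unique:
  fixes N B :: "real^'n^'n"
  assumes "det N \<noteq> 0" "N ** B = mat 1"
  shows "matrix_inv N = B"
  by (metis assms matrix_inv_left matrix_mul_assoc matrix_mul_lid matrix_mul_rid)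

lemma dualmat_mult:
  assumes "det A \<noteq> 0" "det B \<noteq> 0"
  shows "dualmat (A ** B) = dualmat A ** dualmat (B::mat3)"
proof -
  have "transpose (A ** B) ** (dualmat A ** dualmat B)
      = transpose B ** (transpose A ** dualmat A) ** dualmat B"
    by (simp add: matrix_transpose_mul matrix_mul_assoc)
  also have "\<dots> = mat 1"
    using assms by (simp add: dualmat_def matrix_inv_right matrix_mul_rid)
  finally show ?thesis
    using assms by (simp add: dualmat_def[of "A ** B"] matrix_inv_unique det_mul)
qed

lemma det_dualmat: "det N \<noteq> 0 \<Longrightarrow> det (dualmat N) = 1 / det (N::mat3)"
proof -
  assume N: "det N \<noteq> 0"
  have "det (transpose N ** dualmat N) = 1"
    using N by (simp add: dualmat_def matrix_inv_right)
  then show ?thesis using N by (simp add: det_mul field_simps)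
qed

lemma dualmat_dualmat: "det N \<noteq> 0 \<Longrightarrow> dualmat (dualmat N) = (N::mat3)"
proof -
  assume N: "det N \<noteq> 0"
  have "transpose (dualmat N) ** N = transpose (transpose N ** dualmat N)"
    by (simp add: matrix_transpose_mul)
  also have "\<dots> = mat 1"
    using N by (simp add: dualmat_def matrix_inv_right transpose_mat)
  finally show ?thesis
    using N by (simp add: dualmat_def[of "dualmat N"] det_dualmat matrix_inv_unique)
qed

lemma inner_dualmat:
  assumes "det g \<noteq> 0"
  shows "(dualmat g *v w) \<bullet> (g *v x) = w \<bullet> (x::vec3)"
proof -
  have "(dualmat g *v w) v* g = transpose g *v (dualmat g *v w)" by simp
  also have "\<dots> = w"
    using assms by (simp add: dualmat_def matrix_vector_mul_assoc matrix_inv_right)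
  finally show ?thesis by (metis dot_lmul_matrix)
qed

section \<open>Lattices, dual lattices and short vectors\<close>

definition lat :: "mat3 \<Rightarrow> vec3 set" where
  "lat N = (\<lambda>z. N *v z) ` int_vecs"

lemma unimod_lattice_iff: "unimod_lattice L \<longleftrightarrow> (\<exists>N. det N = 1 \<and> L = lat N)"
  unfolding unimod_lattice_def SL3_def lat_def by auto

lemma act_lat: "act g (lat N) = lat (g ** N)"
  unfolding act_def lat_def by (auto simp: matrix_vector_mul_assoc image_image)

lemma int_vecs_add: "a \<in> int_vecs \<Longrightarrow> b \<in> int_vecs \<Longrightarrow> a + b \<in> int_vecs"
  unfolding int_vecs_def by auto

lemma int_vecs_scaleR_of_nat: "a \<in> int_vecs \<Longrightarrow> of_nat k *\<^sub>R a \<in> int_vecs"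
  unfolding int_vecs_def by auto

lemma axis_in_int_vecs: "axis i 1 \<in> int_vecs"
  unfolding int_vecs_def by (simp add: axis_def)

lemma inner_int_vecs: "a \<in> int_vecs \<Longrightarrow> b \<in> int_vecs \<Longrightarrow> a \<bullet> (b::vec3) \<in> \<int>"
  unfolding int_vecs_def by (simp add: inner_vec_def sum_3)

lemma cross3_int_vecs: "a \<in> int_vecs \<Longrightarrow> b \<in> int_vecs \<Longrightarrow> cross3 a b \<in> int_vecs"
  unfolding int_vecs_def by (simp add: cross3_def forall_3 vector_def)

lemma infnorm_int_vecs_ge_1:
  assumes "z \<in> int_vecs" "z \<noteq> 0"
  shows "1 \<le> infnorm z"
proof -
  obtain i where "z$i \<noteq> 0" "z$i \<in> \<int>"
    using assms by (auto simp: vec_eq_iff int_vecs_def)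
  then have "1 \<le> \<bar>z$i\<bar>" by (auto elim!: Ints_cases)
  then show ?thesis using component_le_infnorm_cart[of z i] by linarith
qed

lemma lat_infnorm_bounded_below:
  assumes "det N \<noteq> 0"
  obtains c where "c > 0" "\<And>x. x \<in> lat N \<Longrightarrow> x \<noteq> 0 \<Longrightarrow> c \<le> infnorm x"
proof
  define C where "C = 1 + (\<Sum>i\<in>UNIV. \<Sum>j\<in>UNIV. \<bar>matrix_inv N$i$j\<bar>)"
  have C: "C > 0" unfolding C_def by (simp add: add_pos_nonneg sum_nonneg)
  show "1 / C > 0" using C by simp
  fix x assume "x \<in> lat N" "x \<noteq> 0"
  then obtain z where z: "z \<in> int_vecs" "x = N *v z" "z \<noteq> 0"
    unfolding lat_def by force
  have "matrix_inv N *v x = z"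
    using z assms by (simp add: matrix_vector_mul_assoc matrix_inv_left)
  moreover have "infnorm (matrix_inv N *v x) \<le> C * infnorm x"
  proof (rule infnorm_matrix_vector_le)
    fix i
    have "(\<Sum>j\<in>UNIV. \<bar>matrix_inv N$i$j\<bar>) \<le> (\<Sum>i\<in>UNIV. \<Sum>j\<in>UNIV. \<bar>matrix_inv N$i$j\<bar>)"
      by (rule member_le_sum) (auto simp: sum_nonneg)
    then show "(\<Sum>j\<in>UNIV. \<bar>matrix_inv N$i$j\<bar>) \<le> C" unfolding C_def by linarith
  qed
  ultimately show "1 / C \<le> infnorm x"
    using infnorm_int_vecs_ge_1[OF z(1,3)] C by (simp add: field_simps)
qed

lemma dual_lattice_lat:
  assumes "det N \<noteq> 0"
  shows "dual_lattice (lat N) = lat (dualmat N)"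
proof
  show "dual_lattice (lat N) \<subseteq> lat (dualmat N)"
  proof
    fix w assume w: "w \<in> dual_lattice (lat N)"
    have "(transpose N *v w)$i = w \<bullet> (N *v axis i 1)" for i
      by (simp add: dot_lmul_matrix[symmetric] inner_axis)
    then have "transpose N *v w \<in> int_vecs"
      using w axis_in_int_vecs by (auto simp: int_vecs_def dual_lattice_def lat_def)
    moreover have "w = dualmat N *v (transpose N *v w)"
      using assms by (simp add: dualmat_def matrix_vector_mul_assoc matrix_inv_left
                           del: transpose_matrix_vector)
    ultimately show "w \<in> lat (dualmat N)" unfolding lat_def by blast
  qed
  show "lat (dualmat N) \<subseteq> dual_lattice (lat N)"
    using assms by (auto simp: lat_def dual_lattice_def inner_dualmat inner_int_vecs)
qed

lemma cross3_lat:
  assumes "det N = 1" "x \<in> lat N" "y \<in> lat N"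
  shows "cross3 x y \<in> lat (dualmat N)"
proof -
  obtain a b where ab: "a \<in> int_vecs" "b \<in> int_vecs" "x = N *v a" "y = N *v b"
    using assms unfolding lat_def by auto
  have "cross3 x y = dualmat N *v (transpose N *v cross3 x y)"
    using assms by (simp add: dualmat_def matrix_vector_mul_assoc matrix_inv_left
                         del: transpose_matrix_vector)
  also have "transpose N *v cross3 x y = cross3 a b"
    using cross_matrix_mult[of N a b] assms(1) ab by simp
  finally show ?thesis using cross3_int_vecs[OF ab(1,2)] unfolding lat_def by blast
qed

lemma infnorm_cross3_le: "infnorm (cross3 x y) \<le> 2 * infnorm x * infnorm (y::vec3)"
proof -
  have b: "\<bar>x$j * y$k\<bar> \<le> infnorm x * infnorm y" for j k
    unfolding abs_mult by (intro mult_mono component_le_infnorm_cart) (auto simp: infnorm_pos_le)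
  have "\<bar>cross3 x y $ i\<bar> \<le> 2 * infnorm x * infnorm y" for i
    using exhaust_3[of i] b[of 2 3] b[of 3 2] b[of 3 1] b[of 1 3] b[of 1 2] b[of 2 1]
    by (auto simp: cross3_def vector_def)
  then show ?thesis unfolding infnorm_vec3[of "cross3 x y"] by simp
qed

lemma cross3_eq_0_imp_scaleR:
  assumes "cross3 x u = 0" "u \<noteq> 0"
  obtains l where "x = l *\<^sub>R u"
  using assms cross_eq_0[of x u] collinear_lemma[of u x]
  by (metis insert_commute scaleR_zero_left)

lemma cross3_eq_0_obtain_direction:
  assumes "\<And>x y. x \<in> S \<Longrightarrow> y \<in> S \<Longrightarrow> cross3 x y = 0"
  obtains u :: vec3 where "u \<noteq> 0" "\<And>x. x \<in> S \<Longrightarrow> \<exists>l. x = l *\<^sub>R u"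
proof (cases "S \<subseteq> {0}")
  case True
  then show thesis by (intro that[of "axis 1 1"]) auto
next
  case False
  then obtain u where "u \<in> S" "u \<noteq> 0" by auto
  then show thesis
    using assms cross3_eq_0_imp_scaleR by (intro that[of u]) metis+
qed

lemma short_lat_vectors_parallel:
  assumes N: "det N = 1"
    and B: "\<And>x. x \<in> lat (dualmat N) \<Longrightarrow> x \<noteq> 0 \<Longrightarrow> 1 / infnorm x \<le> B"
  obtains u where "u \<noteq> 0" "\<And>x. x \<in> lat N \<Longrightarrow> 2 * B * (infnorm x)^2 < 1 \<Longrightarrow> \<exists>l. x = l *\<^sub>R u"
proof -
  have cross_0: "cross3 x y = 0"
    if x: "x \<in> lat N" "2 * B * (infnorm x)^2 < 1" and y: "y \<in> lat N" "2 * B * (infnorm y)^2 < 1" for x y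
  proof (rule ccontr)
    assume c: "cross3 x y \<noteq> 0"
    then have "1 / infnorm (cross3 x y) \<le> B" using B cross3_lat[OF N x(1) y(1)] by blast
    moreover have c_pos: "infnorm (cross3 x y) > 0" using c by (simp add: infnorm_pos_lt)
    ultimately have "1 \<le> B * infnorm (cross3 x y)" by (simp add: field_simps)
    then have "0 < B * infnorm (cross3 x y)" by linarith
    then have "B > 0" using c_pos by (rule zero_less_mult_pos2)
    then have "B * infnorm (cross3 x y) \<le> B * (2 * infnorm x * infnorm y)"
      by (intro mult_left_mono infnorm_cross3_le) auto
    with \<open>1 \<le> B * infnorm (cross3 x y)\<close> have "1 \<le> B * (2 * infnorm x * infnorm y)"
      by linarith
    then have "1 \<le> (B * (2 * infnorm x * infnorm y))^2" by (simp add: one_le_power)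
    also have "\<dots> = (2 * B * (infnorm x)^2) * (2 * B * (infnorm y)^2)"
      by (simp add: power2_eq_square algebra_simps)
    also have "\<dots> \<le> 2 * B * (infnorm x)^2"
      using x(2) y(2) \<open>B > 0\<close> by (intro mult_left_le) auto
    finally show False using x(2) by simp
  qed
  obtain u where "u \<noteq> 0" "\<And>x. x \<in> {x \<in> lat N. 2 * B * (infnorm x)^2 < 1} \<Longrightarrow> \<exists>l. x = l *\<^sub>R u"
    by (rule cross3_eq_0_obtain_direction[of "{x \<in> lat N. 2 * B * (infnorm x)^2 < 1}"])
       (use cross_0 in auto)
  then show thesis using that by auto
qed

section \<open>Bounds for alpha and alpha_hat\<close>

lemma Q0_scaleR: "Q0 (k *\<^sub>R v) = k^2 * Q0 v"
  unfolding Q0_def by (simp add: power2_eq_square algebra_simps)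

lemma Q0_polarization:
  fixes N :: mat3 and w :: vec3
  defines "c i \<equiv> N *v axis i 1"
  shows "Q0 (N *v w) = (w$1)^2 * Q0 (c 1) + (w$2)^2 * Q0 (c 2) + (w$3)^2 * Q0 (c 3)
     + w$1 * w$2 * (Q0 (c 1 + c 2) - Q0 (c 1) - Q0 (c 2))
     + w$1 * w$3 * (Q0 (c 1 + c 3) - Q0 (c 1) - Q0 (c 3))
     + w$2 * w$3 * (Q0 (c 2 + c 3) - Q0 (c 2) - Q0 (c 3))"
  unfolding c_def Q0_def
  by (simp add: matrix_vector_mult_def sum_3 axis_def power2_eq_square algebra_simps)

lemma lat_ex_Q0_nonzero:
  assumes "det N \<noteq> 0"
  obtains v where "v \<in> lat N" "Q0 v \<noteq> 0"
proof -
  have "\<not> (\<forall>v\<in>lat N. Q0 v = 0)"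
  proof
    assume Q0_lat: "\<forall>v\<in>lat N. Q0 v = 0"
    have "N *v axis i 1 \<in> lat N" "N *v axis i 1 + N *v axis j 1 \<in> lat N" for i j
      unfolding lat_def matrix_vector_right_distrib[symmetric]
      by (auto intro: axis_in_int_vecs int_vecs_add)
    then have "Q0 (N *v axis i 1) = 0" "Q0 (N *v axis i 1 + N *v axis j 1) = 0" for i j
      using Q0_lat by auto
    then have "Q0 (N *v w) = 0" for w
      using Q0_polarization[of N w] by simp
    moreover have "N *v (matrix_inv N *v axis 2 1) = axis 2 1"
      using assms by (simp add: matrix_vector_mul_assoc matrix_inv_right)
    moreover have "Q0 (axis 2 1) = 1" by (simp add: Q0_def axis_def)
    ultimately show False by (metis zero_neq_one)
  qed
  then show thesis using that by blast
qed

lemma lat_ex_not_Hset: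
  assumes "det N \<noteq> 0" "M \<ge> 0"
  obtains v where "v \<in> lat N" "v \<notin> Hset \<eta> M" "v \<noteq> 0"
proof -
  obtain v where v: "v \<in> lat N" "Q0 v \<noteq> 0" using lat_ex_Q0_nonzero assms(1) by blast
  then have "v \<noteq> 0" by (auto simp: Q0_def)
  then have nv: "infnorm v > 0" by (simp add: infnorm_pos_lt)
  obtain k :: nat where k: "max 1 (max (\<bar>\<eta>\<bar> / \<bar>Q0 v\<bar>) (1 / infnorm v)) \<le> real k"
    using real_arch_simple by blast
  then have k1: "1 \<le> real k" and kQ: "\<bar>\<eta>\<bar> \<le> real k * \<bar>Q0 v\<bar>" and kv: "1 \<le> real k * infnorm v"
    using v(2) nv by (auto simp: field_simps)
  define v' where "v' = real k *\<^sub>R v"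
  have "v' \<in> lat N"
    using v(1) unfolding v'_def lat_def
    by (auto simp: matrix_vector_mult_scaleR[symmetric] intro: int_vecs_scaleR_of_nat)
  moreover have "v' \<noteq> 0" using \<open>v \<noteq> 0\<close> k1 by (simp add: v'_def)
  moreover have "v' \<notin> Hset \<eta> M"
  proof -
    have "1 \<le> infnorm v'" using kv by (simp add: v'_def infnorm_mul)
    then have "infnorm v' powr (- 50 * M) \<le> infnorm v' powr 0"
      using assms(2) by (intro powr_mono) auto
    then have "infnorm v' powr (- 50 * M) \<le> 1"
      using \<open>1 \<le> infnorm v'\<close> by simp
    then have "\<eta> * infnorm v' powr (- 50 * M) \<le> \<bar>\<eta>\<bar>"
      by (meson abs_ge_self abs_ge_zero mult_left_le mult_right_mono order_trans powr_ge_zero)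
    also have "\<dots> \<le> real k * \<bar>Q0 v\<bar>" by (rule kQ)
    also have "\<dots> \<le> real k * (real k * \<bar>Q0 v\<bar>)"
      using mult_right_mono[OF k1, of "real k * \<bar>Q0 v\<bar>"] by simp
    also have "\<dots> = \<bar>Q0 v'\<bar>"
      by (simp add: v'_def Q0_scaleR abs_mult power2_eq_square)
    finally show ?thesis by (simp add: Hset_def)
  qed
  ultimately show thesis using that by blast
qed

lemma bdd_above_inverse_infnorm:
  assumes "c > 0" "\<And>x. x \<in> S \<Longrightarrow> c \<le> infnorm x"
  shows "bdd_above ((\<lambda>x. 1 / infnorm x) ` S)"
  using assms by (intro bdd_aboveI2[of _ _ "1 / c"]) (simp add: frac_le)

lemma alpha_hat1_eq_SUP:
  "alpha_hat1 \<eta> M g L = (SUP v \<in> L - (Hset \<eta> M \<union> {0}). 1 / infnorm (g *v v))"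
  unfolding alpha_hat1_def by (simp only: Setcompr_eq_image)

lemma alpha_eq_SUP: "alpha L = (SUP x \<in> (L \<union> dual_lattice L) - {0}. 1 / infnorm x)"
  unfolding alpha_def by (simp only: Setcompr_eq_image)

lemma inverse_infnorm_le_alpha_hat1:
  assumes "det N \<noteq> 0" "det g \<noteq> 0" "v \<in> lat N - (Hset \<eta> M \<union> {0})"
  shows "1 / infnorm (g *v v) \<le> alpha_hat1 \<eta> M g (lat N)"
proof -
  obtain c where c: "c > 0" "\<And>x. x \<in> lat (g ** N) \<Longrightarrow> x \<noteq> 0 \<Longrightarrow> c \<le> infnorm x"
    using lat_infnorm_bounded_below[of "g ** N"] assms(1,2) by (auto simp: det_mul)
  have "g *v x \<in> lat (g ** N) - {0}" if "x \<in> lat N - {0}" for x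
    using that assms(2) by (auto simp: act_lat[symmetric] act_def matrix_vector_mult_eq_0_iff)
  then have "bdd_above ((\<lambda>x. 1 / infnorm x) ` (\<lambda>v. g *v v) ` (lat N - (Hset \<eta> M \<union> {0})))"
    using c by (intro bdd_above_inverse_infnorm[OF c(1)]) auto
  then show ?thesis
    unfolding alpha_hat1_eq_SUP image_image by (rule cSUP_upper2[where x = v]) (use assms(3) in auto)
qed

lemma inverse_infnorm_le_alpha:
  assumes "det N \<noteq> 0" "x \<in> lat N \<union> lat (dualmat N)" "x \<noteq> 0"
  shows "1 / infnorm x \<le> alpha (lat N)"
proof -
  obtain c1 where c1: "c1 > 0" "\<And>x. x \<in> lat N \<Longrightarrow> x \<noteq> 0 \<Longrightarrow> c1 \<le> infnorm x"
    using lat_infnorm_bounded_below assms(1) by blast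
  obtain c2 where c2: "c2 > 0" "\<And>x. x \<in> lat (dualmat N) \<Longrightarrow> x \<noteq> 0 \<Longrightarrow> c2 \<le> infnorm x"
    using lat_infnorm_bounded_below[of "dualmat N"] assms(1) by (auto simp: det_dualmat)
  have "bdd_above ((\<lambda>x. 1 / infnorm x) ` ((lat N \<union> lat (dualmat N)) - {0}))"
    using c1 c2 by (intro bdd_above_inverse_infnorm[of "min c1 c2"]) (auto simp: min.coboundedI1 min.coboundedI2)
  then show ?thesis
    unfolding alpha_eq_SUP dual_lattice_lat[OF assms(1)]
    by (rule cSUP_upper2[where x = x]) (use assms(2,3) in auto)
qed

lemma alpha_hat_nonneg:
  assumes "det N \<noteq> 0" "det g \<noteq> 0" "M \<ge> 0"
  shows "0 \<le> alpha_hat \<eta> M g (lat N)"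
proof -
  obtain v where v: "v \<in> lat N - (Hset \<eta> M \<union> {0})"
    using lat_ex_not_Hset assms(1,3) by blast
  have "0 \<le> 1 / infnorm (g *v v)" by (simp add: infnorm_pos_le)
  also have "\<dots> \<le> alpha_hat1 \<eta> M g (lat N)"
    using inverse_infnorm_le_alpha_hat1 assms(1,2) v .
  finally show ?thesis by (simp add: alpha_hat_def)
qed

lemma alpha_nonneg:
  assumes "det N \<noteq> 0"
  shows "0 \<le> alpha (lat N)"
proof -
  have "N *v axis 1 1 \<in> lat N" unfolding lat_def using axis_in_int_vecs by blast
  moreover have "N *v axis 1 1 \<noteq> 0"
    using assms by (simp add: matrix_vector_mult_eq_0_iff)
  ultimately have "1 / infnorm (N *v axis 1 1) \<le> alpha (lat N)"
    using inverse_infnorm_le_alpha assms by blast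
  moreover have "0 \<le> 1 / infnorm (N *v axis 1 1)" by (simp add: infnorm_pos_le)
  ultimately show ?thesis by linarith
qed

lemma lat_dual_short_vectors_parallel:
  assumes N: "det N = 1"
  obtains u1 u2 where "u1 \<noteq> 0" "u2 \<noteq> 0"
    "\<And>x. x \<in> lat N \<Longrightarrow> 2 * alpha (lat N) * (infnorm x)^2 < 1 \<Longrightarrow> \<exists>l. x = l *\<^sub>R u1"
    "\<And>y. y \<in> lat (dualmat N) \<Longrightarrow> 2 * alpha (lat N) * (infnorm y)^2 < 1 \<Longrightarrow> \<exists>l. y = l *\<^sub>R u2"
proof -
  have dN: "det (dualmat N) = 1" using N by (simp add: det_dualmat)
  have le_alpha: "1 / infnorm x \<le> alpha (lat N)" if "x \<in> lat N \<union> lat (dualmat N)" "x \<noteq> 0" for x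
    using inverse_infnorm_le_alpha[of N] that N by simp
  obtain u1 where "u1 \<noteq> 0"
    "\<And>x. x \<in> lat N \<Longrightarrow> 2 * alpha (lat N) * (infnorm x)^2 < 1 \<Longrightarrow> \<exists>l. x = l *\<^sub>R u1"
    using short_lat_vectors_parallel[OF N, of "alpha (lat N)"] le_alpha by blast
  moreover obtain u2 where "u2 \<noteq> 0"
    "\<And>y. y \<in> lat (dualmat N) \<Longrightarrow> 2 * alpha (lat N) * (infnorm y)^2 < 1 \<Longrightarrow> \<exists>l. y = l *\<^sub>R u2"
    using short_lat_vectors_parallel[OF dN, of "alpha (lat N)"] le_alpha N by (auto simp: dualmat_dualmat)
  ultimately show thesis using that by blast
qed

section \<open>The orbit of a single vector under a_t u_r\<close>

lemma a_u_mult_vec: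
  "(a_mat t ** u_mat r) *v x
     = vector [exp t * (x$1 + r * x$2 + r^2/2 * x$3), x$2 + r * x$3, exp (-t) * x$3]"
  by (simp add: vec_eq_iff forall_3 vector_def matrix_vector_mult_def matrix_matrix_mult_def
      sum_3 a_mat_def u_mat_def algebra_simps)

lemma det_a_u: "det (a_mat t ** u_mat r) = 1"
  unfolding det_mul by (simp add: det_3 a_mat_def u_mat_def exp_minus)

lemma infnorm_a_u_mult_pos: "x \<noteq> 0 \<Longrightarrow> 0 < infnorm ((a_mat t ** u_mat r) *v x)"
  by (simp add: infnorm_pos_lt matrix_vector_mult_eq_0_iff det_a_u)

lemma inverse_a_u:
  "(u_mat (-r) ** a_mat (-t)) ** (a_mat t ** u_mat r) = mat 1"
  by (simp add: vec_eq_iff forall_3 matrix_matrix_mult_def sum_3 a_mat_def u_mat_def mat_def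
      exp_minus field_simps power2_eq_square)

lemma infnorm_le_a_u_mult:
  assumes "\<bar>r\<bar> \<le> 1" "t \<ge> 0"
  shows "infnorm x \<le> 3 * exp t * infnorm ((a_mat t ** u_mat r) *v x)"
proof -
  have "x = (u_mat (-r) ** a_mat (-t)) *v ((a_mat t ** u_mat r) *v x)"
    by (simp add: matrix_vector_mul_assoc inverse_a_u)
  also have "infnorm \<dots> \<le> 3 * exp t * infnorm ((a_mat t ** u_mat r) *v x)"
  proof (rule infnorm_matrix_vector_le)
    fix i :: 3
    have "r^2 \<le> 1" using assms(1) by (simp add: abs_square_le_1)
    then have e: "exp (-t) \<le> 1" "1 \<le> exp t" "r^2 * exp t \<le> exp t" "\<bar>r\<bar> * exp t \<le> exp t"
      using assms by (auto intro: mult_left_le_one_le)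
    show "(\<Sum>j\<in>UNIV. \<bar>(u_mat (-r) ** a_mat (-t))$i$j\<bar>) \<le> 3 * exp t"
      using exhaust_3[of i]
      by (auto simp: sum_3 matrix_matrix_mult_def a_mat_def u_mat_def abs_mult) (use e assms in linarith)+
  qed
  finally show ?thesis .
qed

definition flip_mat :: mat3 where
  "flip_mat = vector [vector [0, 0, -1], vector [0, 1, 0], vector [-1, 0, 0]]"

lemma det_flip_mat: "det flip_mat = -1"
  by (simp add: det_3 flip_mat_def)

lemma dualmat_a_u: "dualmat (a_mat t ** u_mat r) = flip_mat ** (a_mat t ** u_mat r) ** flip_mat"
  unfolding dualmat_def
proof (rule matrix_inv_unique)
  show "det (transpose (a_mat t ** u_mat r)) \<noteq> 0" by (simp add: det_a_u)
  show "transpose (a_mat t ** u_mat r) ** (flip_mat ** (a_mat t ** u_mat r) ** flip_mat) = mat 1"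
    by (simp add: vec_eq_iff forall_3 vector_def matrix_matrix_mult_def transpose_def sum_3
       a_mat_def u_mat_def mat_def flip_mat_def exp_minus field_simps power2_eq_square)
qed

lemma infnorm_flip_mat: "infnorm (flip_mat *v x) = infnorm x"
  by (simp add: infnorm_vec3 flip_mat_def matrix_vector_mult_def sum_3 vector_def
      max.commute max.left_commute)

lemma odd_extension_has_real_derivative:
  fixes F f :: "real \<Rightarrow> real"
  assumes F: "\<And>s. s > 0 \<Longrightarrow> (F has_real_derivative f s) (at s)" and "r \<noteq> r0"
  shows "((\<lambda>r. if r \<le> r0 then - F (r0 - r) else F (r - r0)) has_real_derivative f \<bar>r - r0\<bar>) (at r)"
proof (cases "r < r0")
  case True
  have "((\<lambda>r. r0 - r) has_real_derivative -1) (at r)"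
    by (auto intro!: derivative_eq_intros)
  then have "((\<lambda>r. - F (r0 - r)) has_real_derivative - (f (r0 - r) * -1)) (at r)"
    using True by (intro DERIV_minus DERIV_chain2[where g = "\<lambda>r. r0 - r", OF F]) auto
  then have "((\<lambda>r. - F (r0 - r)) has_real_derivative f \<bar>r - r0\<bar>) (at r)"
    using True by (simp add: abs_minus_commute abs_of_pos)
  then show ?thesis
    by (rule has_field_derivative_transform_within_open[where S = "{..<r0}"]) (use True in auto)
next
  case False
  with \<open>r \<noteq> r0\<close> have "r0 < r" by simp
  have "((\<lambda>r. r - r0) has_real_derivative 1) (at r)"
    by (auto intro!: derivative_eq_intros)
  then have "((\<lambda>r. F (r - r0)) has_real_derivative f (r - r0) * 1) (at r)"
    using \<open>r0 < r\<close> by (intro DERIV_chain2[where g = "\<lambda>r. r - r0", OF F]) auto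
  then have "((\<lambda>r. F (r - r0)) has_real_derivative f \<bar>r - r0\<bar>) (at r)"
    using \<open>r0 < r\<close> by simp
  then show ?thesis
    by (rule has_field_derivative_transform_within_open[where S = "{r0<..}"]) (use \<open>r0 < r\<close> in auto)
qed

lemma nn_integral_abs_shift_powr_le:
  fixes a d b c r0 :: real
  assumes a: "a > 0" and d: "d > 0" and "b \<le> c"
  shows "(\<integral>\<^sup>+ r\<in>{b..c}. ennreal ((\<bar>r - r0\<bar> + a) powr -(1+d)) \<partial>lborel) \<le> ennreal (2 * a powr -d / d)"
proof -
  define F where "F s = (a powr -d - (s + a) powr -d) / d" for s
  have F_deriv: "(F has_real_derivative (s + a) powr -(1+d)) (at s)" if "s > 0" for s
  proof -
    have "(F has_real_derivative - (-d * (s + a) powr (-d - 1) * 1) / d) (at s)"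
      unfolding F_def using that a d by (intro derivative_eq_intros refl) auto
    moreover have "-d - 1 = -(1 + d)" by simp
    ultimately show ?thesis using d by simp
  qed
  have F_bound: "\<bar>F s\<bar> \<le> a powr -d / d" if "s \<ge> 0" for s
  proof -
    have "(s + a) powr -d \<le> a powr -d" using that a d by (intro powr_mono2') auto
    moreover have "0 \<le> (s + a) powr -d" by simp
    ultimately have "\<bar>a powr -d - (s + a) powr -d\<bar> \<le> a powr -d" by linarith
    then show ?thesis using d by (simp add: F_def divide_right_mono)
  qed
  define P where "P r = (if r \<le> r0 then - F (r0 - r) else F (r - r0))" for r
  have "continuous_on {b..c} P"
    unfolding P_def F_def using a d
    by (intro continuous_on_cases_1 continuous_intros) auto
  moreover have "(P has_vector_derivative (\<bar>r - r0\<bar> + a) powr -(1+d)) (at r)" if "r \<noteq> r0" for r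
    using odd_extension_has_real_derivative[OF F_deriv that]
    by (simp add: P_def[abs_def] has_real_derivative_iff_has_vector_derivative)
  ultimately have "((\<lambda>r. (\<bar>r - r0\<bar> + a) powr -(1+d)) has_integral P c - P b) {b..c}"
    using \<open>b \<le> c\<close> by (intro fundamental_theorem_of_calculus_interior_strong[of "{r0}"]) auto
  then have "(\<integral>\<^sup>+ r\<in>{b..c}. ennreal ((\<bar>r - r0\<bar> + a) powr -(1+d)) \<partial>lborel) = ennreal (P c - P b)"
    by (intro nn_integral_has_integral_lebesgue') auto
  also have "P c - P b \<le> 2 * a powr -d / d"
    using F_bound[of "c - r0"] F_bound[of "r0 - b"] F_bound[of "r0 - c"] F_bound[of "b - r0"]
    by (auto simp: P_def abs_le_iff)
  finally show ?thesis by (simp add: ennreal_leI)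
qed

lemma nn_integral_le_affine:
  fixes f g :: "real \<Rightarrow> real"
  assumes f: "\<And>r. r \<in> {-1..1} \<Longrightarrow> f r \<le> c1 * g r + c0"
    and g: "g \<in> borel_measurable borel" "\<And>r. 0 \<le> g r"
    and c: "0 \<le> c0" "0 \<le> c1" and "0 \<le> Y"
    and I: "(\<integral>\<^sup>+ r\<in>{-1..1}. ennreal (g r) \<partial>lborel) \<le> ennreal Y"
  shows "(\<integral>\<^sup>+ r\<in>{-1..1}. ennreal (f r) \<partial>lborel) \<le> ennreal (c1 * Y + 2 * c0)"
proof -
  have "(\<integral>\<^sup>+ r\<in>{-1..1}. ennreal (f r) \<partial>lborel) \<le> (\<integral>\<^sup>+ r\<in>{-1..1}. ennreal (c1 * g r + c0) \<partial>lborel)"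
    using f by (intro nn_integral_mono) (auto intro!: ennreal_leI simp del: ennreal_plus split: split_indicator)
  also have "\<dots> = (\<integral>\<^sup>+ r. ennreal c1 * (ennreal (g r) * indicator {-1..1} r)
      + ennreal c0 * indicator {-1..1} r \<partial>lborel)"
    using c g(2) by (intro nn_integral_cong) (auto simp: ennreal_plus ennreal_mult split: split_indicator)
  also have "\<dots> = ennreal c1 * (\<integral>\<^sup>+ r\<in>{-1..1}. ennreal (g r) \<partial>lborel) + ennreal c0 * 2"
    using g(1) by (simp add: nn_integral_add nn_integral_cmult)
  also have "\<dots> \<le> ennreal c1 * ennreal Y + ennreal c0 * 2"
    using I by (intro add_mono mult_left_mono) auto
  also have "\<dots> = ennreal (c1 * Y + 2 * c0)"
  proof -
    have "ennreal c1 * ennreal Y = ennreal (c1 * Y)" using c \<open>0 \<le> Y\<close> by (simp add: ennreal_mult)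
    moreover have "ennreal c0 * 2 = ennreal (2 * c0)" using c by (simp add: ennreal_mult' mult.commute)
    ultimately show ?thesis using c \<open>0 \<le> Y\<close> by (simp flip: ennreal_plus)
  qed
  finally show ?thesis .
qed

definition orbit_ratio :: "real \<Rightarrow> real \<Rightarrow> vec3 \<Rightarrow> real" where
  "orbit_ratio t r u = infnorm u / infnorm ((a_mat t ** u_mat r) *v u)"

lemma orbit_ratio_nonneg: "0 \<le> orbit_ratio t r u"
  by (simp add: orbit_ratio_def infnorm_pos_le)

text \<open>-u$2/u$3 is the parameter r at which the middle coordinate u$2 + r u$3 of a_t u_r u
  vanishes. When u$3 = 0 the junk value u$2/0 = 0 is harmless in orbit_ratio_le, since then
  the small-third case applies.\<close>

lemma infnorm_le_a_u_mult_if_large_third: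
  assumes u3: "infnorm u \<le> 4 * \<bar>u$3\<bar>" and "u \<noteq> 0"
  shows "infnorm u * (\<bar>r + u$2 / u$3\<bar> + exp (-t)) \<le> 8 * infnorm ((a_mat t ** u_mat r) *v u)"
proof -
  define F where "F = infnorm ((a_mat t ** u_mat r) *v u)"
  have "\<bar>u$2 + r * u$3\<bar> \<le> F" and "\<bar>exp (-t) * u$3\<bar> \<le> F"
    unfolding F_def a_u_mult_vec infnorm_vec3 by auto
  moreover have "infnorm u > 0" using \<open>u \<noteq> 0\<close> by (simp add: infnorm_pos_lt)
  then have "u$3 \<noteq> 0" using u3 by auto
  then have "\<bar>u$3\<bar> * \<bar>r + u$2 / u$3\<bar> = \<bar>u$2 + r * u$3\<bar>"
    by (simp add: abs_mult[symmetric] field_simps)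
  ultimately have "\<bar>u$3\<bar> * (\<bar>r + u$2 / u$3\<bar> + exp (-t)) \<le> 2 * F"
    by (simp add: abs_mult algebra_simps)
  moreover have "infnorm u * (\<bar>r + u$2 / u$3\<bar> + exp (-t)) \<le> 4 * \<bar>u$3\<bar> * (\<bar>r + u$2 / u$3\<bar> + exp (-t))"
    using u3 by (intro mult_right_mono) auto
  ultimately show ?thesis unfolding F_def by linarith
qed

lemma infnorm_le_a_u_mult_if_small_third:
  assumes u3: "4 * \<bar>u$3\<bar> < infnorm u" and r: "\<bar>r\<bar> \<le> 1" and t: "t \<ge> 0"
  shows "infnorm u \<le> 4 * infnorm ((a_mat t ** u_mat r) *v u)"
proof -
  define F where "F = infnorm ((a_mat t ** u_mat r) *v u)"
  have c1: "\<bar>exp t * (u$1 + r * u$2 + r^2/2 * u$3)\<bar> \<le> F" and c2: "\<bar>u$2 + r * u$3\<bar> \<le> F"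
    unfolding F_def a_u_mult_vec infnorm_vec3 by auto
  have n: "infnorm u = max \<bar>u$1\<bar> (max \<bar>u$2\<bar> \<bar>u$3\<bar>)" by (rule infnorm_vec3)
  have "\<bar>r * u$3\<bar> \<le> \<bar>u$3\<bar>" using r by (simp add: abs_mult mult_left_le_one_le)
  show ?thesis
  proof (cases "2 * \<bar>u$2\<bar> \<ge> infnorm u")
    case True
    then show ?thesis using c2 u3 \<open>\<bar>r * u$3\<bar> \<le> \<bar>u$3\<bar>\<close> unfolding F_def by linarith
  next
    case False
    then have u1: "\<bar>u$1\<bar> = infnorm u" using n u3 by (auto simp: max_def split: if_splits)
    have "\<bar>r * u$2\<bar> \<le> \<bar>u$2\<bar>" using r by (simp add: abs_mult mult_left_le_one_le)
    moreover have "r^2 * \<bar>u$3\<bar> \<le> \<bar>u$3\<bar>"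
      using r by (simp add: abs_square_le_1 mult_left_le_one_le)
    then have "\<bar>r^2/2 * u$3\<bar> \<le> \<bar>u$3\<bar>" by (simp add: abs_mult)
    moreover have "\<bar>u$1 + r * u$2 + r^2/2 * u$3\<bar> \<le> \<bar>exp t * (u$1 + r * u$2 + r^2/2 * u$3)\<bar>"
      using t by (simp add: abs_mult mult_le_cancel_right1)
    ultimately show ?thesis using c1 u1 u3 False unfolding F_def by linarith
  qed
qed

lemma orbit_ratio_le:
  assumes u: "u \<noteq> 0" and r: "\<bar>r\<bar> \<le> 1" and t: "t \<ge> 0"
  shows "orbit_ratio t r u \<le> max (8 / (\<bar>r + u$2 / u$3\<bar> + exp (-t))) 4"
proof -
  define F where "F = infnorm ((a_mat t ** u_mat r) *v u)"
  define X where "X = \<bar>r + u$2 / u$3\<bar> + exp (-t)"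
  have F: "F > 0" unfolding F_def using u by (rule infnorm_a_u_mult_pos)
  have X: "X > 0" unfolding X_def by (simp add: add_nonneg_pos)
  have "infnorm u \<le> 8 / X * F \<or> infnorm u \<le> 4 * F"
  proof (cases "infnorm u \<le> 4 * \<bar>u$3\<bar>")
    case True
    then have "infnorm u * X \<le> 8 * F"
      unfolding X_def F_def using u by (rule infnorm_le_a_u_mult_if_large_third)
    then show ?thesis using X by (simp add: field_simps)
  next
    case False
    then show ?thesis unfolding F_def using r t by (simp add: infnorm_le_a_u_mult_if_small_third)
  qed
  moreover have "8 / X * F \<le> max (8 / X) 4 * F" "4 * F \<le> max (8 / X) 4 * F"
    using F by (intro mult_right_mono; simp)+
  ultimately have "infnorm u \<le> max (8 / X) 4 * F" by linarith
  then show ?thesis using F by (simp add: orbit_ratio_def pos_divide_le_eq F_def X_def)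
qed

lemma orbit_ratio_measurable:
  "(\<lambda>r. orbit_ratio t r u) \<in> borel_measurable borel"
  unfolding orbit_ratio_def a_u_mult_vec infnorm_vec3 vector_3 by measurable

lemma orbit_integral_constant_le:
  fixes d E :: real
  assumes d: "0 < d" "d \<le> 1/32" and E: "32 \<le> E"
  shows "8 powr (1 + d) * (2 * E) + 2 * 4 powr (1 + d) \<le> 25 * E"
proof -
  have "(8::real) powr d \<le> 8 powr (1/6)" using d by (intro powr_mono) auto
  also have "\<dots> \<le> ((3/2) powr 6) powr (1/6)" by (intro powr_mono2) (auto simp: power_divide)
  also have "\<dots> = 3/2" by (simp add: powr_powr del: powr_numeral)
  finally have "8 powr (1 + d) \<le> 12" by (simp add: powr_add)
  then have "8 powr (1 + d) * (2 * E) \<le> 12 * (2 * E)" using E by (intro mult_right_mono) auto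
  moreover have "4 powr (1 + d) \<le> 4 powr 2" using d by (intro powr_mono) auto
  then have "4 powr (1 + d) \<le> 16" by simp
  ultimately show ?thesis using E by linarith
qed

lemma nn_integral_orbit_ratio_powr_le:
  assumes u: "u \<noteq> 0" and t: "t \<ge> 0" and d: "0 < d" "d \<le> 1/32"
  shows "(\<integral>\<^sup>+ r\<in>{-1..1}. ennreal (orbit_ratio t r u powr (1 + d)) \<partial>lborel)
    \<le> ennreal (25 * exp (d * t) / d)"
proof -
  define p where "p = 1 + d"
  define h where "h r = (\<bar>r + u$2 / u$3\<bar> + exp (-t)) powr -p" for r
  define E where "E = exp (d * t) / d"
  have E: "E > 0" using d by (simp add: E_def)
  have pw: "orbit_ratio t r u powr p \<le> 8 powr p * h r + 4 powr p" if "r \<in> {-1..1}" for r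
  proof -
    define X where "X = \<bar>r + u$2 / u$3\<bar> + exp (-t)"
    have X: "X > 0" unfolding X_def by (simp add: add_nonneg_pos)
    have "orbit_ratio t r u powr p \<le> max (8 / X) 4 powr p"
      using orbit_ratio_le[OF u _ t, of r] that d
      by (intro powr_mono2) (auto simp: p_def X_def orbit_ratio_nonneg)
    also have "\<dots> \<le> (8 / X) powr p + 4 powr p" by (simp add: max_def)
    also have "(8 / X) powr p = 8 powr p * h r"
      using X by (simp add: h_def X_def powr_divide powr_minus_divide)
    finally show ?thesis .
  qed
  have "(\<integral>\<^sup>+ r\<in>{-1..1}. ennreal (h r) \<partial>lborel) \<le> ennreal (2 * E)"
    using nn_integral_abs_shift_powr_le[of "exp (-t)" d "-1" 1 "- (u$2 / u$3)"] d
    by (simp add: h_def p_def E_def exp_powr_real mult.commute[of t d])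
  moreover have "h \<in> borel_measurable borel" unfolding h_def by measurable
  ultimately have "(\<integral>\<^sup>+ r\<in>{-1..1}. ennreal (orbit_ratio t r u powr p) \<partial>lborel)
      \<le> ennreal (8 powr p * (2 * E) + 2 * 4 powr p)"
    using pw E by (intro nn_integral_le_affine) (auto simp: h_def)
  also have "\<dots> \<le> ennreal (25 * E)"
  proof -
    have "1 \<le> exp (d * t)" using d t by simp
    then have "32 * d \<le> exp (d * t)" using d by linarith
    then have "32 \<le> E" using d by (simp add: E_def field_simps)
    then show ?thesis using d unfolding p_def by (intro ennreal_leI orbit_integral_constant_le)
  qed
  finally show ?thesis by (simp add: p_def E_def)
qed

section \<open>Averaging alpha_hat along the orbit\<close>

lemma inverse_infnorm_a_u_le:
  assumes z: "z \<noteq> 0" and u: "u \<noteq> 0" and zA: "1 / infnorm z \<le> A"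
    and short: "2 * B * (infnorm z)^2 < 1 \<Longrightarrow> \<exists>l. z = l *\<^sub>R u"
    and r: "\<bar>r\<bar> \<le> 1" and t: "t \<ge> 0"
  shows "1 / infnorm ((a_mat t ** u_mat r) *v z)
    \<le> max (A * orbit_ratio t r u) (3 * exp t * min A (sqrt (2 * B)))"
proof -
  have nz: "infnorm z > 0" using z by (simp add: infnorm_pos_lt)
  have hz: "infnorm ((a_mat t ** u_mat r) *v z) > 0" using z by (rule infnorm_a_u_mult_pos)
  show ?thesis
  proof (cases "2 * B * (infnorm z)^2 < 1")
    case True
    then obtain l where l: "z = l *\<^sub>R u" using short by blast
    with z have "l \<noteq> 0" by auto
    then have "1 / infnorm ((a_mat t ** u_mat r) *v z) = 1 / infnorm z * orbit_ratio t r u"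
      using u by (simp add: l orbit_ratio_def matrix_vector_mult_scaleR infnorm_mul infnorm_eq_0)
    also have "\<dots> \<le> A * orbit_ratio t r u"
      using zA by (intro mult_right_mono) (auto simp: orbit_ratio_nonneg)
    finally show ?thesis by simp
  next
    case False
    then have "(1 / infnorm z)^2 \<le> 2 * B" using nz by (simp add: field_simps power2_eq_square)
    then have zm: "1 / infnorm z \<le> min A (sqrt (2 * B))" using zA by (simp add: real_le_rsqrt)
    have "infnorm z \<le> 3 * exp t * infnorm ((a_mat t ** u_mat r) *v z)"
      using r t by (rule infnorm_le_a_u_mult)
    then have "1 / infnorm ((a_mat t ** u_mat r) *v z) \<le> 3 * exp t * (1 / infnorm z)"
      using nz hz by (simp add: field_simps)
    also have "\<dots> \<le> 3 * exp t * min A (sqrt (2 * B))"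
      using zm by (intro mult_left_mono) auto
    finally show ?thesis by simp
  qed
qed

lemma alpha_hat1_a_u_le:
  fixes g N :: mat3
  assumes N: "det N \<noteq> 0" and g: "det g \<noteq> 0" and M: "M \<ge> 0"
    and r: "\<bar>r\<bar> \<le> 1" and t: "t \<ge> 0" and u: "u \<noteq> 0"
    and A: "alpha_hat1 \<eta> M g (lat N) \<le> A"
    and short: "\<And>x. x \<in> lat (g ** N) \<Longrightarrow> 2 * B * (infnorm x)^2 < 1 \<Longrightarrow> \<exists>l. x = l *\<^sub>R u"
  shows "0 \<le> alpha_hat1 \<eta> M (a_mat t ** u_mat r ** g) (lat N)"
    and "alpha_hat1 \<eta> M (a_mat t ** u_mat r ** g) (lat N)
      \<le> max (A * orbit_ratio t r u) (3 * exp t * min A (sqrt (2 * B)))"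
proof -
  define D where "D = lat N - (Hset \<eta> M \<union> {0})"
  define f where "f v = 1 / infnorm ((a_mat t ** u_mat r ** g) *v v)" for v
  define C where "C = max (A * orbit_ratio t r u) (3 * exp t * min A (sqrt (2 * B)))"
  have f_le: "f v \<le> C" if v: "v \<in> D" for v
  proof -
    have gv: "g *v v \<in> lat (g ** N)" "g *v v \<noteq> 0"
      using v g by (auto simp: D_def act_lat[symmetric] act_def matrix_vector_mult_eq_0_iff)
    have "1 / infnorm (g *v v) \<le> A"
      using inverse_infnorm_le_alpha_hat1[OF N g] v A by (fastforce simp: D_def)
    then have "1 / infnorm ((a_mat t ** u_mat r) *v (g *v v)) \<le> C"
      unfolding C_def using gv short u r t by (intro inverse_infnorm_a_u_le) auto
    then show ?thesis by (simp add: f_def matrix_vector_mul_assoc)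
  qed
  obtain v where v: "v \<in> D" using lat_ex_not_Hset[OF N M] unfolding D_def by blast
  have bdd: "bdd_above (f ` D)" using f_le by (intro bdd_aboveI2)
  have "0 \<le> f v" by (simp add: f_def infnorm_pos_le)
  also have "f v \<le> Sup (f ` D)" using v bdd by (rule cSUP_upper)
  finally show "0 \<le> alpha_hat1 \<eta> M (a_mat t ** u_mat r ** g) (lat N)"
    by (simp add: alpha_hat1_eq_SUP f_def D_def)
  have "Sup (f ` D) \<le> C" using v f_le by (intro cSUP_least) auto
  then show "alpha_hat1 \<eta> M (a_mat t ** u_mat r ** g) (lat N) \<le> C"
    by (simp add: alpha_hat1_eq_SUP f_def D_def)
qed

lemma alpha_hat1_flip_mat_mult: "alpha_hat1 \<eta> M (flip_mat ** P) L = alpha_hat1 \<eta> M P L"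
  unfolding alpha_hat1_eq_SUP by (simp add: matrix_vector_mul_assoc[symmetric] infnorm_flip_mat)

lemma alpha_hat2_lat: "det N \<noteq> 0 \<Longrightarrow> alpha_hat2 \<eta> M P (lat N) = alpha_hat1 \<eta> M (dualmat P) (lat (dualmat N))"
  by (simp add: alpha_hat2_def dual_lattice_lat)

lemma alpha_hat2_a_u_le:
  fixes g N :: mat3
  assumes N: "det N \<noteq> 0" and g: "det g \<noteq> 0" and M: "M \<ge> 0"
    and r: "\<bar>r\<bar> \<le> 1" and t: "t \<ge> 0" and u: "u \<noteq> 0"
    and A: "alpha_hat2 \<eta> M g (lat N) \<le> A"
    and short: "\<And>y. y \<in> lat (dualmat (g ** N)) \<Longrightarrow> 2 * B * (infnorm y)^2 < 1 \<Longrightarrow> \<exists>l. y = l *\<^sub>R u"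
  shows "0 \<le> alpha_hat2 \<eta> M (a_mat t ** u_mat r ** g) (lat N)"
    and "alpha_hat2 \<eta> M (a_mat t ** u_mat r ** g) (lat N)
      \<le> max (A * orbit_ratio t r (flip_mat *v u))
             (3 * exp t * min A (sqrt (2 * B)))"
proof -
  have dN: "det (dualmat N) \<noteq> 0" and dg: "det (flip_mat ** dualmat g) \<noteq> 0"
    using N g by (simp_all add: det_dualmat det_mul det_flip_mat)
  have "dualmat (a_mat t ** u_mat r ** g) = flip_mat ** (a_mat t ** u_mat r ** (flip_mat ** dualmat g))"
    using g det_a_u[of t r] by (simp add: dualmat_mult dualmat_a_u matrix_mul_assoc)
  then have eq: "alpha_hat2 \<eta> M (a_mat t ** u_mat r ** g) (lat N)
      = alpha_hat1 \<eta> M (a_mat t ** u_mat r ** (flip_mat ** dualmat g)) (lat (dualmat N))"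
    by (simp only: alpha_hat2_lat[OF N] alpha_hat1_flip_mat_mult)
  have A': "alpha_hat1 \<eta> M (flip_mat ** dualmat g) (lat (dualmat N)) \<le> A"
    using A N by (simp add: alpha_hat2_lat alpha_hat1_flip_mat_mult)
  have short': "\<exists>l. x = l *\<^sub>R (flip_mat *v u)"
    if x: "x \<in> lat ((flip_mat ** dualmat g) ** dualmat N)" "2 * B * (infnorm x)^2 < 1" for x
  proof -
    have "lat ((flip_mat ** dualmat g) ** dualmat N) = act flip_mat (lat (dualmat (g ** N)))"
      using N g by (simp add: act_lat dualmat_mult matrix_mul_assoc)
    then obtain y where "y \<in> lat (dualmat (g ** N))" "x = flip_mat *v y"
      using x(1) by (auto simp: act_def)
    then show ?thesis
      using short[of y] x(2) by (auto simp: infnorm_flip_mat matrix_vector_mult_scaleR)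
  qed
  have "flip_mat *v u \<noteq> 0"
    using u by (metis infnorm_eq_0 infnorm_flip_mat)
  from alpha_hat1_a_u_le[OF dN dg M r t this A' short'] show "0 \<le> alpha_hat2 \<eta> M (a_mat t ** u_mat r ** g) (lat N)"
    and "alpha_hat2 \<eta> M (a_mat t ** u_mat r ** g) (lat N)
      \<le> max (A * orbit_ratio t r (flip_mat *v u))
             (3 * exp t * min A (sqrt (2 * B)))"
    unfolding eq by auto
qed

lemma alpha_hat_a_u_le:
  fixes g N :: mat3
  assumes g: "det g = 1" and N: "det N = 1" and M: "M \<ge> 0" and t: "t \<ge> 0"
  obtains u1 u2 where "u1 \<noteq> 0" "u2 \<noteq> 0"
    and "\<And>r. r \<in> {-1..1} \<Longrightarrow> 0 \<le> alpha_hat \<eta> M (a_mat t ** u_mat r ** g) (lat N)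
      \<and> alpha_hat \<eta> M (a_mat t ** u_mat r ** g) (lat N)
        \<le> max (alpha_hat \<eta> M g (lat N) * orbit_ratio t r u1)
            (max (alpha_hat \<eta> M g (lat N) * orbit_ratio t r u2)
                 (3 * exp t * min (alpha_hat \<eta> M g (lat N)) (sqrt (2 * alpha (act g (lat N))))))"
proof -
  define A where "A = alpha_hat \<eta> M g (lat N)"
  define B where "B = alpha (act g (lat N))"
  have gN: "det (g ** N) = 1" using g N by (simp add: det_mul)
  obtain u1 u2 where u: "u1 \<noteq> 0" "u2 \<noteq> 0"
    and short1: "\<And>x. x \<in> lat (g ** N) \<Longrightarrow> 2 * B * (infnorm x)^2 < 1 \<Longrightarrow> \<exists>l. x = l *\<^sub>R u1"
    and short2: "\<And>y. y \<in> lat (dualmat (g ** N)) \<Longrightarrow> 2 * B * (infnorm y)^2 < 1 \<Longrightarrow> \<exists>l. y = l *\<^sub>R u2"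
    using lat_dual_short_vectors_parallel[OF gN] unfolding B_def act_lat by blast
  have N0: "det N \<noteq> 0" and g0: "det g \<noteq> 0" using N g by auto
  have A1: "alpha_hat1 \<eta> M g (lat N) \<le> A" and A2: "alpha_hat2 \<eta> M g (lat N) \<le> A"
    by (simp_all add: A_def alpha_hat_def)
  have max_max: "max (max a c) (max b c) = max a (max b c)" for a b c :: real
    by (auto simp: max_def)
  show thesis
  proof (rule that[OF u(1)])
    show "flip_mat *v u2 \<noteq> 0" using u(2) by (metis infnorm_eq_0 infnorm_flip_mat)
    fix r :: real assume "r \<in> {-1..1}"
    then have r: "\<bar>r\<bar> \<le> 1" by auto
    note bound1 = alpha_hat1_a_u_le[where B = B, OF N0 g0 M r t u(1) A1 short1]
    note bound2 = alpha_hat2_a_u_le[where B = B, OF N0 g0 M r t u(2) A2 short2]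
    have "alpha_hat \<eta> M (a_mat t ** u_mat r ** g) (lat N)
        \<le> max (max (A * orbit_ratio t r u1) (3 * exp t * min A (sqrt (2 * B))))
              (max (A * orbit_ratio t r (flip_mat *v u2)) (3 * exp t * min A (sqrt (2 * B))))"
      unfolding alpha_hat_def using bound1(2) bound2(2) by (rule max.mono)
    moreover have "0 \<le> alpha_hat \<eta> M (a_mat t ** u_mat r ** g) (lat N)"
      using bound1(1) by (simp add: alpha_hat_def)
    ultimately show "0 \<le> alpha_hat \<eta> M (a_mat t ** u_mat r ** g) (lat N)
      \<and> alpha_hat \<eta> M (a_mat t ** u_mat r ** g) (lat N)
        \<le> max (alpha_hat \<eta> M g (lat N) * orbit_ratio t r u1)
            (max (alpha_hat \<eta> M g (lat N) * orbit_ratio t r (flip_mat *v u2))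
                 (3 * exp t * min (alpha_hat \<eta> M g (lat N)) (sqrt (2 * alpha (act g (lat N))))))"
      unfolding max_max A_def B_def by blast
  qed
qed

lemma nn_integral_max3_powr_le:
  fixes f a b :: "real \<Rightarrow> real"
  assumes f: "\<And>r. r \<in> {-1..1} \<Longrightarrow> 0 \<le> f r \<and> f r \<le> max (A * a r) (max (A * b r) c)"
    and a: "a \<in> borel_measurable borel" "\<And>r. 0 \<le> a r"
    and b: "b \<in> borel_measurable borel" "\<And>r. 0 \<le> b r"
    and "0 \<le> A" "0 \<le> c" "0 \<le> p" "0 \<le> X"
    and Ia: "(\<integral>\<^sup>+ r\<in>{-1..1}. ennreal (a r powr p) \<partial>lborel) \<le> ennreal X"
    and Ib: "(\<integral>\<^sup>+ r\<in>{-1..1}. ennreal (b r powr p) \<partial>lborel) \<le> ennreal X"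
  shows "(\<integral>\<^sup>+ r\<in>{-1..1}. ennreal (f r powr p) \<partial>lborel) \<le> ennreal (2 * A powr p * X + 2 * c powr p)"
proof -
  have pw: "f r powr p \<le> A powr p * (a r powr p + b r powr p) + c powr p" if "r \<in> {-1..1}" for r
  proof -
    have "f r powr p \<le> max (A * a r) (max (A * b r) c) powr p"
      using f[OF that] \<open>0 \<le> p\<close> by (intro powr_mono2) auto
    also have "\<dots> \<le> (A * a r) powr p + (A * b r) powr p + c powr p"
      by (simp add: max_def)
    finally show ?thesis using \<open>0 \<le> A\<close> a(2) b(2) by (simp add: powr_mult distrib_left)
  qed
  have "(\<integral>\<^sup>+ r\<in>{-1..1}. ennreal (a r powr p + b r powr p) \<partial>lborel)
      = (\<integral>\<^sup>+ r\<in>{-1..1}. ennreal (a r powr p) \<partial>lborel) + (\<integral>\<^sup>+ r\<in>{-1..1}. ennreal (b r powr p) \<partial>lborel)"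
    using a(1) b(1) by (simp add: nn_set_integral_add)
  also have "\<dots> \<le> ennreal (2 * X)"
    using add_mono[OF Ia Ib] \<open>0 \<le> X\<close> by (simp flip: ennreal_plus)
  finally have "(\<integral>\<^sup>+ r\<in>{-1..1}. ennreal (f r powr p) \<partial>lborel) \<le> ennreal (A powr p * (2 * X) + 2 * c powr p)"
    using pw \<open>0 \<le> X\<close> a(1) b(1)
    by (intro nn_integral_le_affine[where g = "\<lambda>r. a r powr p + b r powr p"]) (auto simp del: ennreal_plus)
  moreover have "A powr p * (2 * X) = 2 * A powr p * X" by (simp add: ac_simps)
  ultimately show ?thesis by (simp only:)
qed

lemma nn_integral_alpha_hat_a_u_le:
  fixes g N :: mat3
  assumes g: "det g = 1" and N: "det N = 1" and M: "M \<ge> 0" and t: "t \<ge> 0"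
    and d: "0 < d" "d \<le> 1/32"
  shows "(\<integral>\<^sup>+ r\<in>{-1..1}. ennreal (alpha_hat \<eta> M (a_mat t ** u_mat r ** g) (lat N) powr (1 + d)) \<partial>lborel)
    \<le> ennreal (2 * alpha_hat \<eta> M g (lat N) powr (1 + d) * (25 * exp (d * t) / d)
      + 2 * (3 * exp t * min (alpha_hat \<eta> M g (lat N)) (sqrt (2 * alpha (act g (lat N))))) powr (1 + d))"
proof -
  define A where "A = alpha_hat \<eta> M g (lat N)"
  define B where "B = alpha (act g (lat N))"
  have "0 \<le> A" using alpha_hat_nonneg[of N g M \<eta>] N g M by (simp add: A_def)
  have "0 \<le> B" using alpha_nonneg[of "g ** N"] N g by (simp add: B_def act_lat det_mul)
  obtain u1 u2 where u: "u1 \<noteq> 0" "u2 \<noteq> 0"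
    and bound: "\<And>r. r \<in> {-1..1} \<Longrightarrow> 0 \<le> alpha_hat \<eta> M (a_mat t ** u_mat r ** g) (lat N)
      \<and> alpha_hat \<eta> M (a_mat t ** u_mat r ** g) (lat N)
        \<le> max (A * orbit_ratio t r u1) (max (A * orbit_ratio t r u2) (3 * exp t * min A (sqrt (2 * B))))"
    using alpha_hat_a_u_le[OF g N M t, of \<eta>] unfolding A_def B_def by blast
  show ?thesis
    unfolding A_def[symmetric] B_def[symmetric]
    using \<open>0 \<le> A\<close> \<open>0 \<le> B\<close> d bound
      nn_integral_orbit_ratio_powr_le[OF u(1) t d] nn_integral_orbit_ratio_powr_le[OF u(2) t d]
    by (intro nn_integral_max3_powr_le[where a = "\<lambda>r. orbit_ratio t r u1" and b = "\<lambda>r. orbit_ratio t r u2"])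
       (auto simp: orbit_ratio_measurable orbit_ratio_nonneg)
qed

section \<open>Numerical estimates\<close>

lemma powr_le_one_add_powr:
  fixes Y p q :: real
  assumes "0 \<le> Y" "0 \<le> p" "p \<le> q"
  shows "Y powr p \<le> 1 + Y powr q"
proof (cases "Y \<le> 1")
  case True
  then have "Y powr p \<le> 1" using assms by (intro powr_le1) auto
  then show ?thesis using powr_ge_zero[of Y q] by linarith
next
  case False
  then have "Y powr p \<le> Y powr q" using assms by (intro powr_mono) auto
  then show ?thesis by simp
qed

lemma exceptional_term_le_small_t:
  fixes A d t :: real
  assumes A: "0 \<le> A" and d: "0 < d" "d < 0.01" and t: "0 \<le> t" "t \<le> 4"
  shows "2 * (3 * exp t * A) powr (1 + d) \<le> 30 / d * exp (d * t) * A powr (1 + d)"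
proof -
  have "3 powr (1 + d) \<le> 3 powr (2::real)" using d by (intro powr_mono) auto
  moreover have "exp t \<le> 81"
  proof -
    have "exp t \<le> exp 4" using t by simp
    also have "\<dots> = exp 1 ^ 4" using exp_of_nat_mult[of 4 "1::real"] by simp
    also have "\<dots> \<le> 3 ^ 4" using exp_le by (intro power_mono) auto
    finally show ?thesis by simp
  qed
  ultimately have "3 powr (1 + d) * exp t \<le> 9 * 81" by (intro mult_mono) auto
  moreover have "1458 \<le> 30 / d" using d by (simp add: field_simps)
  ultimately have "2 * (3 powr (1 + d) * exp t) \<le> 30 / d" by linarith
  then have "2 * (3 powr (1 + d) * exp t) * (exp (d * t) * A powr (1 + d))
      \<le> 30 / d * (exp (d * t) * A powr (1 + d))"
    by (intro mult_right_mono) auto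
  moreover have "(3 * exp t * A) powr (1 + d) = 3 powr (1 + d) * exp t * (exp (d * t) * A powr (1 + d))"
    using A by (simp add: powr_mult exp_powr_real distrib_left exp_add algebra_simps)
  ultimately show ?thesis by (simp add: algebra_simps)
qed

lemma exp_ge_4096:
  fixes t :: real
  assumes "4 \<le> t"
  shows "4096 \<le> exp (3 * t)"
proof -
  have "(2::real) ^ 12 \<le> exp 1 ^ 12" using exp_ge_add_one_self[of 1] by (intro power_mono) auto
  also have "\<dots> = exp 12" using exp_of_nat_mult[of 12 "1::real"] by simp
  also have "\<dots> \<le> exp (3 * t)" using assms by simp
  finally show ?thesis by simp
qed

lemma exceptional_term_le_small_B:
  fixes B t :: real
  assumes B: "0 \<le> B" "B \<le> exp (3 * t)" and t: "4 \<le> t"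
  shows "2 * (1 + (3 * exp t * sqrt (2 * B)) powr (27/25)) \<le> 1/2 * exp (6 * t)"
proof -
  have "sqrt (exp (3 * t)) = exp (3 * t / 2)"
    by (rule real_sqrt_unique) (simp_all add: power2_eq_square exp_add[symmetric])
  then have "sqrt B \<le> exp (3 * t / 2)" using real_sqrt_le_mono[OF B(2)] by simp
  then have "sqrt (2 * B) \<le> sqrt 2 * exp (3 * t / 2)" by (simp add: real_sqrt_mult)
  then have "3 * exp t * sqrt (2 * B) \<le> 3 * exp t * (sqrt 2 * exp (3 * t / 2))"
    by (intro mult_left_mono) auto
  also have "\<dots> = 3 * sqrt 2 * exp (5 * t / 2)" by (simp add: exp_add[symmetric] algebra_simps)
  also have "\<dots> \<le> 5 * exp (5 * t / 2)"
    using real_le_lsqrt[of "5/3" 2] by (simp add: power2_eq_square)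
  finally have "(3 * exp t * sqrt (2 * B)) powr (27/25) \<le> (5 * exp (5 * t / 2)) powr (27/25)"
    using B by (intro powr_mono2) auto
  also have "\<dots> = 5 powr (27/25) * exp (27 * t / 10)"
    by (simp add: powr_mult exp_powr_real)
  also have "\<dots> \<le> 25 * exp (27 * t / 10)"
    using powr_mono[of "27/25" 2 "5::real"] by (intro mult_right_mono) auto
  finally have "2 * (1 + (3 * exp t * sqrt (2 * B)) powr (27/25)) \<le> 2 + 50 * exp (27 * t / 10)"
    by simp
  moreover have "4096 * exp (27 * t / 10) \<le> exp (6 * t)"
  proof -
    have "exp (3 * t) \<le> exp (33 * t / 10)" using t by simp
    then have "4096 \<le> exp (33 * t / 10)" using exp_ge_4096[OF t] by linarith
    then have "4096 * exp (27 * t / 10) \<le> exp (33 * t / 10) * exp (27 * t / 10)"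
      by (intro mult_right_mono) auto
    also have "\<dots> = exp (6 * t)" by (simp add: exp_add[symmetric])
    finally show ?thesis .
  qed
  moreover have "1 \<le> exp (27 * t / 10)" using t by simp
  ultimately show ?thesis by linarith
qed

lemma exceptional_term_le_large_B:
  fixes B d t :: real
  assumes B: "exp (3 * t) < B" and d: "0 < d" "d < 0.01" and t: "4 \<le> t"
  shows "2 * (1 + (3 * exp t * sqrt (2 * B)) powr (27/25)) \<le> 80 / d * B powr 0.9 + 1/2 * exp (6 * t)"
proof -
  have "B \<ge> 0" using B exp_gt_zero[of "3 * t"] by linarith
  have "exp t = exp (3 * t) powr (1/3)" by (simp add: exp_powr_real)
  also have "\<dots> \<le> B powr (1/3)" using B by (intro powr_mono2) auto
  finally have "3 * exp t * sqrt (2 * B) \<le> 3 * (B powr (1/3)) * (sqrt 2 * B powr (1/2))"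
    using \<open>B \<ge> 0\<close> by (intro mult_mono) (auto simp: real_sqrt_mult powr_half_sqrt)
  also have "\<dots> = 3 * sqrt 2 * B powr (5/6)" by (simp add: powr_add[symmetric])
  finally have "(3 * exp t * sqrt (2 * B)) powr (27/25) \<le> (3 * sqrt 2 * B powr (5/6)) powr (27/25)"
    using \<open>B \<ge> 0\<close> by (intro powr_mono2) auto
  also have "\<dots> = (3 * sqrt 2) powr (27/25) * B powr (9/10)"
    using \<open>B \<ge> 0\<close> by (simp add: powr_mult powr_powr)
  also have "\<dots> \<le> 18 * B powr (9/10)"
  proof -
    have "1 \<le> sqrt (2::real)" by simp
    then have "(3 * sqrt 2) powr (27/25) \<le> (3 * sqrt (2::real)) powr (2::real)"
      by (intro powr_mono) linarith+
    then show ?thesis by (intro mult_right_mono) (auto simp: power2_eq_square)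
  qed
  finally have "2 * (1 + (3 * exp t * sqrt (2 * B)) powr (27/25)) \<le> 2 + 36 * B powr 0.9" by simp
  moreover have "36 * B powr 0.9 \<le> 80 / d * B powr 0.9"
    using d by (intro mult_right_mono) (auto simp: field_simps)
  moreover have "4 \<le> exp (6 * t)"
    using exp_ge_4096[OF t] exp_le_cancel_iff[of "3 * t" "6 * t"] t by linarith
  ultimately show ?thesis by linarith
qed

lemma exceptional_term_le_large_t:
  fixes B d t :: real
  assumes B: "0 \<le> B" and d: "0 < d" "d < 0.01" and t: "4 \<le> t"
  shows "2 * (3 * exp t * sqrt (2 * B)) powr (1 + d) \<le> 80 / d * B powr 0.9 + 1/2 * exp (6 * t)"
proof -
  have "(3 * exp t * sqrt (2 * B)) powr (1 + d) \<le> 1 + (3 * exp t * sqrt (2 * B)) powr (27/25)"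
    using B d by (intro powr_le_one_add_powr) auto
  then have "2 * (3 * exp t * sqrt (2 * B)) powr (1 + d) \<le> 2 * (1 + (3 * exp t * sqrt (2 * B)) powr (27/25))"
    by simp
  also have "\<dots> \<le> 80 / d * B powr 0.9 + 1/2 * exp (6 * t)"
  proof (cases "B \<le> exp (3 * t)")
    case True
    moreover have "0 \<le> 80 / d * B powr 0.9" using d by simp
    ultimately show ?thesis using exceptional_term_le_small_B[OF B _ t] by linarith
  next
    case False
    then show ?thesis using exceptional_term_le_large_B[OF _ d t] by simp
  qed
  finally show ?thesis .
qed

lemma margulis_constants_le:
  fixes A B d t :: real
  assumes A: "0 \<le> A" and B: "0 \<le> B" and d: "0 < d" "d < 0.01" and t: "0 \<le> t"
  shows "2 * A powr (1 + d) * (25 * exp (d * t) / d) + 2 * (3 * exp t * min A (sqrt (2 * B))) powr (1 + d)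
    \<le> 80 / d * exp (d * t) * A powr (1 + d) + 80 / d * B powr 0.9 + 1/2 * exp (6 * t)"
proof -
  define V where "V = exp (d * t) * A powr (1 + d) / d"
  have V: "2 * A powr (1 + d) * (25 * exp (d * t) / d) = 50 * V"
    "30 / d * exp (d * t) * A powr (1 + d) = 30 * V" "80 / d * exp (d * t) * A powr (1 + d) = 80 * V"
    by (simp_all add: V_def)
  have nonneg: "0 \<le> V" "0 \<le> 80 / d * B powr 0.9" "0 \<le> 1/2 * exp (6 * t)"
    using d by (auto simp: V_def)
  show ?thesis
  proof (cases "t \<le> 4")
    case True
    have "(3 * exp t * min A (sqrt (2 * B))) powr (1 + d) \<le> (3 * exp t * A) powr (1 + d)"
      using A B d by (intro powr_mono2 mult_left_mono) auto
    then show ?thesis using exceptional_term_le_small_t[OF A d t True] nonneg V by linarith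
  next
    case False
    have "(3 * exp t * min A (sqrt (2 * B))) powr (1 + d) \<le> (3 * exp t * sqrt (2 * B)) powr (1 + d)"
      using A B d by (intro powr_mono2 mult_left_mono) auto
    then show ?thesis using exceptional_term_le_large_t[OF B d, of t] False nonneg V by linarith
  qed
qed

theorem lemma3p5:
  fixes \<eta> M \<delta> t :: real and g :: mat3 and \<Delta> :: "vec3 set"
  assumes "0 < \<eta>" "\<eta> < 1" "M > 1" "0 < \<delta>" "\<delta> < 0.01"
    and "g \<in> Hgrp" "unimod_lattice \<Delta>" "t > 0"
  shows "(\<integral>\<^sup>+ r \<in> {-1..1}. ennreal (alpha_hat \<eta> M (a_mat t ** u_mat r ** g) \<Delta> powr (1 + \<delta>)) \<partial>lborel)
    \<le> ennreal (80 / \<delta> * exp (\<delta> * t) * alpha_hat \<eta> M g \<Delta> powr (1 + \<delta>)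
               + 80 / \<delta> * alpha (act g \<Delta>) powr 0.9 + 1/2 * exp (6 * t))"
proof -
  obtain N where N: "det N = 1" and \<Delta>: "\<Delta> = lat N"
    using \<open>unimod_lattice \<Delta>\<close> unimod_lattice_iff by blast
  have g: "det g = 1" using \<open>g \<in> Hgrp\<close> by (simp add: Hgrp_def SL3_def)
  have M: "M \<ge> 0" and t: "t \<ge> 0" and \<delta>: "0 < \<delta>" "\<delta> < 0.01" using assms by auto
  have A: "0 \<le> alpha_hat \<eta> M g \<Delta>" using alpha_hat_nonneg[of N g M \<eta>] N g M by (simp add: \<Delta>)
  have B: "0 \<le> alpha (act g \<Delta>)" using alpha_nonneg[of "g ** N"] N g by (simp add: \<Delta> act_lat det_mul)
  have "(\<integral>\<^sup>+ r \<in> {-1..1}. ennreal (alpha_hat \<eta> M (a_mat t ** u_mat r ** g) \<Delta> powr (1 + \<delta>)) \<partial>lborel)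
      \<le> ennreal (2 * alpha_hat \<eta> M g \<Delta> powr (1 + \<delta>) * (25 * exp (\<delta> * t) / \<delta>)
        + 2 * (3 * exp t * min (alpha_hat \<eta> M g \<Delta>) (sqrt (2 * alpha (act g \<Delta>)))) powr (1 + \<delta>))"
    using nn_integral_alpha_hat_a_u_le[OF g N M t, of \<delta> \<eta>] \<delta> unfolding \<Delta> by simp
  then show ?thesis using ennreal_leI[OF margulis_constants_le[OF A B \<delta> t]] by (rule order_trans)
qed

end
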